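(* Let $n,d\ge0$ and $k>0$ be integers. Let $\lambda$ be a partition with $\lambda_1\le d$ and $\ell(\lambda)\le k$. Let $\alpha$ be a partition with $\alpha_{n+1}\le n+d$ such that $\tau_{2k}(\alpha)$ is defined and equals $\lambda$, and let $w$ be a finite permutation of the positive integers such that $w\bullet\alpha^\dagger=(\beta_1,\dots,\beta_{n+d},\gamma_1,\gamma_2,\dots)$ with $\beta_1\ge\cdots\ge\beta_{n+d}$ and $n\ge\gamma_1\ge\gamma_2\ge\cdots\ge0$. Then $|\gamma|\le\iota_{2k}(\alpha)+\ell(w)$. Moreover, if $|\gamma|=\iota_{2k}(\alpha)+\ell(w)$, then $\iota_{2k}(\alpha)=0$ and $\alpha^\dagger=\lambda^\dagger=(\beta_1,\dots,\beta_d)$, and $w\bullet\alpha^\dagger=(\lambda^\dagger_1,\dots,\lambda^\dagger_d,-\gamma^\dagger_n,\dots,-\gamma^\dagger_1,\gamma_1,\gamma_2,\dots)$ where $|\gamma|=\ell(w)$.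
   Context: Partitions are identified with infinite weakly decreasing sequences of nonnegative integers, eventually $0$; $\lambda^\dagger$ is the transpose partition, $\ell(\lambda)$ the number of nonzero parts, $|\gamma|=\sum_i\gamma_i$. For a finite permutation $w$ and a sequence $a$, $w(a)_i=a_{w^{-1}(i)}$; with $\rho=(-1,-2,-3,\dots)$, $w\bullet a=w(a+\rho)-\rho$; $\ell(w)=\#\{i<j: w(i)>w(j)\}$. A border strip is a connected skew Young diagram containing no $2\times2$ square; $c(R)$ is the number of columns a border strip $R$ occupies. Type C modification rule (quantities $\iota_{2k}=\iota^{\mathrm C}_{2k}$ and $\tau_{2k}=\tau^{\mathrm C}_{2k}$): if $\ell(\lambda)\le k$, put $\iota_{2k}(\lambda)=0$, $\tau_{2k}(\lambda)=\lambda$. If $\ell(\lambda)>k$, let $R_\lambda$ be the border strip of length $2\ell(\lambda)-2k-2$ consisting of the first that many boxes of the rim of $\lambda$ (boxes $(i,j)\in\lambda$ with $(i+1,j+1)\notin\lambda$), traversed starting from the first box (row $\ell(\lambda)$, column $1$) of the final row, if it exists. If $R_\lambda$ exists, is nonempty, and $\lambda\setminus R_\lambda$ is a partition, put $\iota_{2k}(\lambda)=c(R_\lambda)+\iota_{2k}(\lambda\setminus R_\lambda)$ and $\tau_{2k}(\lambda)=\tau_{2k}(\lambda\setminus R_\lambda)$; otherwise $\iota_{2k}(\lambda)=\infty$ and $\tau_{2k}(\lambda)$ is undefined. *)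

theory Defs
  imports Main "HOL-Library.Extended_Nat"
begin

(* Conventions: all sequences are 0-indexed, i.e. entry i of a sequence
   (a :: nat => _) is the paper's entry a_{i+1}.  Boxes of Young diagrams are
   0-indexed pairs (row, column). *)

definition is_partition :: "(nat \<Rightarrow> nat) \<Rightarrow> bool" where
  "is_partition p \<longleftrightarrow> (\<forall>i. p (Suc i) \<le> p i) \<and> finite {i. p i \<noteq> 0}"

definition plen :: "(nat \<Rightarrow> nat) \<Rightarrow> nat" where
  "plen p = card {i. p i \<noteq> 0}"

definition conj :: "(nat \<Rightarrow> nat) \<Rightarrow> nat \<Rightarrow> nat" where
  "conj p j = card {i. j < p i}"

definition conjZ :: "(nat \<Rightarrow> int) \<Rightarrow> nat \<Rightarrow> nat" where
  "conjZ p j = card {i. int j < p i}"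

definition diagram :: "(nat \<Rightarrow> nat) \<Rightarrow> (nat \<times> nat) set" where
  "diagram p = {(i, j). j < p i}"

definition rim :: "(nat \<Rightarrow> nat) \<Rightarrow> (nat \<times> nat) set" where
  "rim p = {(i, j). (i, j) \<in> diagram p \<and> (Suc i, Suc j) \<notin> diagram p}"

fun rim_path :: "(nat \<Rightarrow> nat) \<Rightarrow> nat \<Rightarrow> nat \<times> nat" where
  "rim_path p 0 = (plen p - 1, 0)"
| "rim_path p (Suc t) = (let (i, j) = rim_path p t in
     if Suc j < p i then (i, Suc j) else (i - 1, j))"

definition border_strip :: "(nat \<Rightarrow> nat) \<Rightarrow> nat \<Rightarrow> (nat \<times> nat) set" where
  "border_strip p m = rim_path p ` {..<m}"

definition ncols :: "(nat \<times> nat) set \<Rightarrow> nat" where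
  "ncols R = card (snd ` R)"

definition is_young :: "(nat \<times> nat) set \<Rightarrow> bool" where
  "is_young D \<longleftrightarrow> (\<exists>q. is_partition q \<and> diagram q = D)"

definition shape :: "(nat \<times> nat) set \<Rightarrow> nat \<Rightarrow> nat" where
  "shape D i = card {j. (i, j) \<in> D}"

(* Type C modification rule: Some (iota_{2k}(p), tau_{2k}(p)), or None when
   iota_{2k}(p) = infinity and tau_{2k}(p) is undefined. *)
partial_function (option) iota_tau :: "nat \<Rightarrow> (nat \<Rightarrow> nat) \<Rightarrow> (nat \<times> (nat \<Rightarrow> nat)) option" where
  "iota_tau k p =
    (if plen p \<le> k then Some (0, p)
     else (let m = 2 * plen p - 2 * k - 2; R = border_strip p m in
       if m = 0 \<or> card (rim p) < m \<or> \<not> is_young (diagram p - R) then None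
       else Option.bind (iota_tau k (shape (diagram p - R)))
              (\<lambda>(c, t). Some (ncols R + c, t))))"

definition iotaC :: "nat \<Rightarrow> (nat \<Rightarrow> nat) \<Rightarrow> enat" where
  "iotaC k p = (case iota_tau k p of None \<Rightarrow> \<infinity> | Some (c, t) \<Rightarrow> enat c)"

definition tauC :: "nat \<Rightarrow> (nat \<Rightarrow> nat) \<Rightarrow> (nat \<Rightarrow> nat) option" where
  "tauC k p = map_option snd (iota_tau k p)"

definition finite_perm :: "(nat \<Rightarrow> nat) \<Rightarrow> bool" where
  "finite_perm w \<longleftrightarrow> bij w \<and> finite {i. w i \<noteq> i}"

definition perm_length :: "(nat \<Rightarrow> nat) \<Rightarrow> nat" where
  "perm_length w = card {(i, j). i < j \<and> w j < w i}"

definition rho :: "nat \<Rightarrow> int" where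
  "rho i = - (int i + 1)"

(* w(a)_i = a_{w^{-1}(i)};  w \<bullet> a = w(a + rho) - rho *)
definition dot :: "(nat \<Rightarrow> nat) \<Rightarrow> (nat \<Rightarrow> int) \<Rightarrow> nat \<Rightarrow> int" where
  "dot w a i = a (inv w i) + rho (inv w i) - rho i"

definition seqsize :: "(nat \<Rightarrow> int) \<Rightarrow> int" where
  "seqsize g = (\<Sum>i\<in>{i. g i \<noteq> 0}. g i)"

end

theory Submission
  imports Defs
begin

text \<open>Write \<open>a = \<alpha>\<^sup>\<dagger>\<close> and \<open>v = w\<^sup>-\<^sup>1\<close>. Since \<open>a\<close> and both blocks of \<open>w \<bullet> a\<close> are weakly decreasing,
  \<open>v\<close> is increasing on the \<open>\<beta>\<close>-block and on the \<open>\<gamma>\<close>-block. Counting the positions below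
  \<open>v(n + d + t)\<close> gives \<open>\<gamma>\<^sub>t = a\<^bsub>v(n+d+t)\<^esub> + #{p < n + d. v p > v(n + d + t)}\<close>. The second terms
  are distinct inversions of \<open>w\<close>, so they sum to at most \<open>\<ell>(w)\<close>. Because \<open>\<gamma>\<^sub>t \<le> n\<close>, the first terms
  count distinct boxes of \<open>\<alpha>\<close> strictly to the right of the diagonal shifted by \<open>d\<close>; each border
  strip \<open>R\<close> removed by the modification rule contains at most \<open>c(R) - 1\<close> of them, so there are
  fewer than \<open>\<iota>\<^sub>2\<^sub>k(\<alpha>)\<close> unless \<open>\<iota>\<^sub>2\<^sub>k(\<alpha>) = 0\<close> and \<open>\<alpha> = \<lambda>\<close>. In the equality case \<open>\<alpha>\<close> has at most
  \<open>d\<close> columns, \<open>v\<close> fixes the first \<open>d\<close> positions, and the middle block is read off by the same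
  counting.\<close>

lemma down_closed_eq_lessThan:
  fixes A :: "nat set"
  assumes "finite A" and "\<And>x y. x \<in> A \<Longrightarrow> y \<le> x \<Longrightarrow> y \<in> A"
  shows "A = {..<card A}"
proof -
  define K where "K = (LEAST x. x \<notin> A)"
  have "\<exists>x. x \<notin> A" using assms(1) infinite_UNIV_nat by (metis UNIV_eq_I)
  then have K: "K \<notin> A" "\<forall>y<K. y \<in> A"
    unfolding K_def using LeastI_ex[of "\<lambda>x. x \<notin> A"] not_less_Least by auto
  have "A = {..<K}"
    using K assms(2) not_less by blast
  then show ?thesis by simp
qed

lemma antimono_partition: "is_partition p \<Longrightarrow> antimono p"
  unfolding is_partition_def by (simp add: antimono_iff_le_Suc)

lemma rows_longer_eq_lessThan_conj:
  assumes "is_partition p"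
  shows "{i. c < p i} = {..<conj p c}"
  unfolding conj_def
proof (rule down_closed_eq_lessThan)
  have "{i. c < p i} \<subseteq> {i. p i \<noteq> 0}" by auto
  then show "finite {i. c < p i}"
    using assms finite_subset unfolding is_partition_def by blast
  show "y \<in> {i. c < p i}" if "x \<in> {i. c < p i}" "y \<le> x" for x y
    using that antimonoD[OF antimono_partition[OF assms] that(2)] by simp
qed

lemma conj_less_iff: "is_partition p \<Longrightarrow> i < conj p j \<longleftrightarrow> j < p i"
  using rows_longer_eq_lessThan_conj[of p j] by blast

lemma less_plen_iff: "is_partition p \<Longrightarrow> i < plen p \<longleftrightarrow> p i \<noteq> 0"
  using conj_less_iff[of p i 0] unfolding conj_def plen_def by simp

lemma conj_eq_0: "is_partition p \<Longrightarrow> p 0 \<le> j \<Longrightarrow> conj p j = 0"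
  using conj_less_iff[of p 0 j] by simp

lemma is_partition_conj:
  assumes "is_partition p"
  shows "is_partition (conj p)"
  unfolding is_partition_def
proof
  show "\<forall>j. conj p (Suc j) \<le> conj p j"
  proof
    fix j
    have "{i. Suc j < p i} \<subseteq> {i. j < p i}" by auto
    then show "conj p (Suc j) \<le> conj p j"
      unfolding conj_def using rows_longer_eq_lessThan_conj[OF assms, of j]
      by (metis card_lessThan card_mono finite_lessThan)
  qed
  have "{j. conj p j \<noteq> 0} \<subseteq> {..<p 0}"
    using conj_eq_0[OF assms] not_less by blast
  then show "finite {j. conj p j \<noteq> 0}"
    by (rule finite_subset) simp
qed

lemma finite_diagram:
  assumes "is_partition p"
  shows "finite (diagram p)"
proof (rule finite_subset)
  show "diagram p \<subseteq> {..<plen p} \<times> {..<p 0}"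
    using less_plen_iff[OF assms] antimonoD[OF antimono_partition[OF assms], of 0]
    unfolding diagram_def by (auto intro: order.strict_trans2)
qed simp

lemma shape_diagram: "shape (diagram q) = q"
  unfolding shape_def diagram_def by simp

lemma is_young_shape: "is_young D \<Longrightarrow> is_partition (shape D) \<and> diagram (shape D) = D"
  unfolding is_young_def using shape_diagram by metis

definition content :: "nat \<times> nat \<Rightarrow> int" where
  "content x = int (snd x) - int (fst x)"

definition diag_excess :: "nat \<Rightarrow> (nat \<Rightarrow> nat) \<Rightarrow> (nat \<times> nat) set" where
  "diag_excess d p = {(i, j) \<in> diagram p. i + d < j}"

lemma finite_diag_excess: "is_partition p \<Longrightarrow> finite (diag_excess d p)"
  by (rule rev_finite_subset[OF finite_diagram]) (auto simp: diag_excess_def)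

lemma diag_excess_empty:
  assumes "is_partition p" and "p 0 \<le> d"
  shows "diag_excess d p = {}"
proof -
  have "\<not> (j < p i \<and> i + d < j)" for i j
    using antimonoD[OF antimono_partition[OF assms(1)], of 0 i] assms(2) by simp
  then show ?thesis unfolding diag_excess_def diagram_def by auto
qed

lemma rim_path_Suc_cases:
  "rim_path p (Suc t) = rim_path p t \<or> content (rim_path p (Suc t)) = content (rim_path p t) + 1"
  by (cases "rim_path p t") (auto simp: content_def)

lemma content_rim_path_mono: "s \<le> t \<Longrightarrow> content (rim_path p s) \<le> content (rim_path p t)"
proof (rule lift_Suc_mono_le)
  show "content (rim_path p t) \<le> content (rim_path p (Suc t))" for t
    using rim_path_Suc_cases[of p t] by auto
qed

lemma rim_path_eq_if_content_eq:
  assumes "s \<le> t" and "content (rim_path p s) = content (rim_path p t)"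
  shows "rim_path p s = rim_path p t"
  using assms
proof (induction t rule: dec_induct)
  case (step t)
  show ?case
  proof (cases "rim_path p (Suc t) = rim_path p t")
    case False
    then have "content (rim_path p (Suc t)) = content (rim_path p t) + 1"
      using rim_path_Suc_cases by blast
    then show ?thesis using step.prems content_rim_path_mono[OF step.hyps(1), of p] by linarith
  qed (use step in simp)
qed simp

lemma inj_on_content_rim_path: "inj_on content (range (rim_path p))"
proof (rule inj_onI)
  fix x y assume "x \<in> range (rim_path p)" "y \<in> range (rim_path p)" and eq: "content x = content y"
  then obtain s t where st: "x = rim_path p s" "y = rim_path p t" by blast
  show "x = y"
  proof (cases "s \<le> t")
    case True
    then show ?thesis using rim_path_eq_if_content_eq[OF True] eq st by simp
  next
    case False
    then show ?thesis using rim_path_eq_if_content_eq[of t s p] eq st by simp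
  qed
qed

lemma rim_path_reaches_columns:
  "c \<le> snd (rim_path p t) \<Longrightarrow> \<exists>s\<le>t. snd (rim_path p s) = c"
proof (induction t)
  case (Suc t)
  have "snd (rim_path p (Suc t)) \<le> Suc (snd (rim_path p t))"
    by (cases "rim_path p t") auto
  then show ?case
  proof (cases "c = snd (rim_path p (Suc t))")
    case False
    then show ?thesis using Suc \<open>snd (rim_path p (Suc t)) \<le> _\<close> le_Suc_eq by auto
  qed blast
qed simp

lemma finite_border_strip: "finite (border_strip p m)"
  unfolding border_strip_def by simp

lemma rim_path_0_mem_border_strip: "0 < m \<Longrightarrow> rim_path p 0 \<in> border_strip p m"
  unfolding border_strip_def by (intro imageI) simp

text \<open>Contents of boxes of a border strip are distinct, and a box of content \<open>c > 0\<close> lies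
  in column \<open>\<ge> c\<close>, so the strip also meets column \<open>c\<close>: content injects the boxes above the
  main diagonal into the nonzero columns of the strip.\<close>

lemma card_above_diagonal_less_ncols:
  assumes "0 < m"
  shows "card {(i, j) \<in> border_strip p m. i < j} < ncols (border_strip p m)"
proof -
  let ?R = "border_strip p m"
  let ?S = "{(i, j) \<in> ?R. i < j}"
  have finR: "finite ?R" by (rule finite_border_strip)
  have "rim_path p 0 \<in> ?R" using assms by (rule rim_path_0_mem_border_strip)
  then have col0: "0 \<in> snd ` ?R" by (metis image_eqI rim_path.simps(1) snd_conv)
  have "inj_on (\<lambda>x. snd x - fst x) ?S"
  proof (rule inj_onI)
    fix x y assume x: "x \<in> ?S" and y: "y \<in> ?S" and eq: "snd x - fst x = snd y - fst y"
    have "fst x < snd x" "fst y < snd y" using x y by auto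
    then have "content x = content y" using eq unfolding content_def by arith
    moreover have "?S \<subseteq> range (rim_path p)" unfolding border_strip_def by blast
    ultimately show "x = y" using x y inj_on_content_rim_path by (blast dest: inj_onD)
  qed
  moreover have "(\<lambda>x. snd x - fst x) ` ?S \<subseteq> snd ` ?R - {0}"
  proof
    fix z assume "z \<in> (\<lambda>x. snd x - fst x) ` ?S"
    then obtain x where x: "x \<in> ?S" and z: "z = snd x - fst x" by blast
    then obtain s where s: "s < m" "x = rim_path p s" unfolding border_strip_def by auto
    have "fst x < snd x" using x by auto
    obtain s' where "s' \<le> s" "snd (rim_path p s') = z"
      using rim_path_reaches_columns[of z p s] z s(2) by auto
    then have "z \<in> snd ` ?R"
      using s(1) unfolding border_strip_def by (metis image_eqI lessThan_iff le_less_trans)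
    then show "z \<in> snd ` ?R - {0}" using z \<open>fst x < snd x\<close> by simp
  qed
  ultimately have "card ?S \<le> card (snd ` ?R - {0})"
    by (rule card_inj_on_le) (use finR in simp)
  also have "\<dots> < ncols ?R"
    unfolding ncols_def using card_Diff1_less[OF finite_imageI[OF finR] col0] .
  finally show ?thesis .
qed

lemma card_diag_excess_strip:
  assumes "0 < m" and "is_partition p" and "diagram q = diagram p - border_strip p m"
  shows "card (diag_excess d p) < card (diag_excess d q) + ncols (border_strip p m)"
proof -
  let ?S = "{(i, j) \<in> border_strip p m. i < j}"
  have "diag_excess d q \<subseteq> diagram p"
    using assms(3) unfolding diag_excess_def by blast
  then have "finite (diag_excess d q)"
    using finite_diagram[OF assms(2)] by (rule finite_subset)
  moreover have "finite ?S"
    using finite_border_strip by (rule finite_subset[rotated]) blast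
  moreover have "diag_excess d p \<subseteq> diag_excess d q \<union> ?S"
  proof
    fix x assume x: "x \<in> diag_excess d p"
    obtain i j where ij: "x = (i, j)" "(i, j) \<in> diagram p" "i + d < j"
      using x unfolding diag_excess_def by blast
    show "x \<in> diag_excess d q \<union> ?S"
    proof (cases "x \<in> border_strip p m")
      case True
      then show ?thesis using ij by simp
    next
      case False
      then show ?thesis using ij assms(3) unfolding diag_excess_def by simp
    qed
  qed
  ultimately have "card (diag_excess d p) \<le> card (diag_excess d q \<union> ?S)"
    by (intro card_mono) simp_all
  also have "\<dots> \<le> card (diag_excess d q) + card ?S"
    by (rule card_Un_le)
  finally show ?thesis using card_above_diagonal_less_ncols[OF assms(1), of p] by linarith
qed

lemma iota_tau_diag_excess:
  assumes "iota_tau k p = Some (c, t)" and "is_partition p" and "t 0 \<le> d"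
  shows "card (diag_excess d p) < c \<or> c = 0 \<and> t = p"
  using assms
proof (induction "card (diagram p)" arbitrary: p c rule: less_induct)
  case less
  show ?case
  proof (cases "plen p \<le> k")
    case True
    then show ?thesis using less.prems(1) iota_tau.simps[of k p] by simp
  next
    case False
    define m where "m = 2 * plen p - 2 * k - 2"
    define R where "R = border_strip p m"
    define q where "q = shape (diagram p - R)"
    have "(if m = 0 \<or> card (rim p) < m \<or> \<not> is_young (diagram p - R) then None
        else Option.bind (iota_tau k q) (\<lambda>(c, t). Some (ncols R + c, t))) = Some (c, t)"
      using less.prems(1) iota_tau.simps[of k p] False unfolding m_def R_def q_def Let_def by simp
    then obtain c' where m: "0 < m" and young: "is_young (diagram p - R)"
      and iq: "iota_tau k q = Some (c', t)" and c: "c = ncols R + c'"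
      by (auto simp: bind_eq_Some_conv split: if_splits prod.splits)
    have q: "is_partition q" "diagram q = diagram p - R"
      using is_young_shape[OF young] unfolding q_def by auto
    have "(plen p - 1, 0) \<in> R"
      using rim_path_0_mem_border_strip[OF m] unfolding R_def by simp
    moreover have "(plen p - 1, 0) \<in> diagram p"
      using less_plen_iff[OF less.prems(2), of "plen p - 1"] False unfolding diagram_def by simp
    ultimately have "card (diagram q) < card (diagram p)"
      using q(2) finite_diagram[OF less.prems(2)] by (intro psubset_card_mono) auto
    then have "card (diag_excess d q) < c' \<or> c' = 0 \<and> t = q"
      using less.hyps iq q(1) less.prems(3) by blast
    then have "card (diag_excess d q) \<le> c'"
      using diag_excess_empty[OF q(1)] less.prems(3) by auto
    then show ?thesis
      using card_diag_excess_strip[OF m less.prems(2) q(2)[unfolded R_def], where d = d] c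
      unfolding R_def by simp
  qed
qed

lemma dot_apply: "dot w a i = a (inv w i) - int (inv w i) + int i"
  unfolding dot_def rho_def by simp

lemma inv_less_eq_image:
  assumes "bij w"
  shows "{p. inv w p < x} = w ` {..<x}"
proof (intro set_eqI iffI)
  fix p assume "p \<in> {p. inv w p < x}"
  moreover have "w (inv w p) = p" using assms by (simp add: bij_is_surj surj_f_inv_f)
  ultimately show "p \<in> w ` {..<x}" by (metis image_eqI lessThan_iff mem_Collect_eq)
next
  fix p assume "p \<in> w ` {..<x}"
  then show "p \<in> {p. inv w p < x}" using assms by (auto simp: bij_is_inj)
qed

lemma card_inv_less:
  assumes "bij w"
  shows "card {p. inv w p < x} = x"
proof -
  have "inj_on w {..<x}" using bij_is_inj[OF assms] by (rule inj_on_subset) simp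
  then show ?thesis using inv_less_eq_image[OF assms] by (simp add: card_image)
qed

lemma inv_less_if_dot_antitone:
  assumes "antimono a" and "bij w" and "i < j"
    and "dot w (\<lambda>i. int (a i)) j \<le> dot w (\<lambda>i. int (a i)) i"
  shows "inv w i < inv w j"
proof (rule ccontr)
  assume "\<not> inv w i < inv w j"
  moreover have "inj (inv w)" using bij_imp_bij_inv[OF assms(2)] bij_is_inj by blast
  then have "inv w i \<noteq> inv w j" using assms(3) by (simp add: inj_eq)
  ultimately have lt: "inv w j < inv w i" by simp
  then have "a (inv w i) \<le> a (inv w j)" using assms(1) by (simp add: antimonoD)
  moreover have "dot w (\<lambda>i. int (a i)) i = int (a (inv w i)) - int (inv w i) + int i"
    "dot w (\<lambda>i. int (a i)) j = int (a (inv w j)) - int (inv w j) + int j"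
    by (simp_all add: dot_apply)
  ultimately show False using assms(3,4) lt by linarith
qed

lemma finite_inversions:
  assumes "finite_perm w"
  shows "finite {(i, j). i < j \<and> w j < w i}"
proof -
  have "finite {i. w i \<noteq> i}" and bij: "bij w"
    using assms unfolding finite_perm_def by blast+
  then obtain M where "\<forall>i\<in>{i. w i \<noteq> i}. i < M"
    using finite_nat_set_iff_bounded by blast
  then have M: "w i = i" if "M \<le> i" for i
    using that not_le by blast
  have "{(i, j). i < j \<and> w j < w i} \<subseteq> (SIGMA i:{..<M}. inv w ` {..<w i})"
  proof safe
    fix i j assume ij: "i < j" "w j < w i"
    show "i < M"
    proof (rule ccontr)
      assume "\<not> i < M"
      then have "w i = i" "w j = j" using M ij(1) by simp_all
      then show False using ij by simp
    qed
    have "inv w (w j) = j" using bij by (simp add: bij_is_inj)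
    then show "j \<in> inv w ` {..<w i}" using ij(2) by (metis image_eqI lessThan_iff)
  qed
  then show ?thesis by (rule finite_subset) simp
qed

locale dot_split =
  fixes alpha w :: "nat \<Rightarrow> nat" and n d :: nat and beta gamma :: "nat \<Rightarrow> int"
  assumes partition: "is_partition alpha"
    and perm: "finite_perm w"
    and dot_eq: "dot w (\<lambda>i. int (conj alpha i)) =
      (\<lambda>i. if i < n + d then beta i else gamma (i - (n + d)))"
    and beta_step: "\<forall>i. Suc i < n + d \<longrightarrow> beta (Suc i) \<le> beta i"
    and gamma_0_le: "gamma 0 \<le> int n"
    and gamma_step: "\<forall>i. gamma (Suc i) \<le> gamma i"
begin

abbreviation N :: nat where "N \<equiv> n + d"

abbreviation v :: "nat \<Rightarrow> nat" where "v \<equiv> inv w"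

lemma bij: "bij w"
  using perm unfolding finite_perm_def by blast

lemma inv_eq_iff: "v p = q \<longleftrightarrow> w q = p"
  using bij_inv_eq_iff[OF bij, of q p] by auto

lemma inj_inv: "inj v"
  using bij_imp_bij_inv[OF bij] bij_is_inj by blast

lemma w_inv [simp]: "w (v p) = p"
  using inv_eq_iff[THEN iffD1, OF refl] .

lemma antimono_conj: "antimono (conj alpha)"
  by (rule antimono_partition[OF is_partition_conj[OF partition]])

lemma dot_conj_apply:
  "int (conj alpha (v i)) - int (v i) + int i = (if i < N then beta i else gamma (i - N))"
  using fun_cong[OF dot_eq, of i] by (simp add: dot_apply)

lemma beta_antimono: "i \<le> j \<Longrightarrow> j < N \<Longrightarrow> beta j \<le> beta i"
proof (induction j rule: dec_induct)
  case (step j)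
  then have "beta j \<le> beta i" by simp
  moreover have "beta (Suc j) \<le> beta j" using beta_step step.prems by blast
  ultimately show ?case by simp
qed simp

lemma gamma_antimono: "i \<le> j \<Longrightarrow> gamma j \<le> gamma i"
  using gamma_step by (simp add: lift_Suc_antimono_le)

lemma inv_less_on_beta:
  assumes "i < j" and "j < N"
  shows "v i < v j"
proof (rule inv_less_if_dot_antitone[OF antimono_conj bij assms(1)])
  show "dot w (\<lambda>i. int (conj alpha i)) j \<le> dot w (\<lambda>i. int (conj alpha i)) i"
    using assms beta_antimono[of i j] by (simp add: dot_eq)
qed

lemma inv_less_on_gamma:
  assumes "N \<le> i" and "i < j"
  shows "v i < v j"
proof (rule inv_less_if_dot_antitone[OF antimono_conj bij assms(2)])
  show "dot w (\<lambda>i. int (conj alpha i)) j \<le> dot w (\<lambda>i. int (conj alpha i)) i"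
    using assms gamma_antimono[of "i - N" "j - N"] by (simp add: dot_eq)
qed

definition gamma_source :: "nat \<Rightarrow> nat" where
  "gamma_source t = v (N + t)"

lemma strict_mono_gamma_source: "strict_mono gamma_source"
  by (rule strict_monoI) (simp add: gamma_source_def inv_less_on_gamma)

lemma gamma_source_less_iff: "gamma_source s < gamma_source t \<longleftrightarrow> s < t"
  using strict_mono_gamma_source by (rule strict_mono_less)

lemma inj_gamma_source: "inj gamma_source"
  using strict_mono_gamma_source by (rule strict_mono_imp_inj_on)

lemma gamma_by_source:
  "gamma t = int (conj alpha (gamma_source t)) - int (gamma_source t) + int N + int t"
  using dot_conj_apply[of "N + t"] unfolding gamma_source_def by simp

lemma conj_at_gamma_source_le: "conj alpha (gamma_source t) + d + t \<le> gamma_source t"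
  using gamma_by_source[of t] gamma_antimono[of 0 t] gamma_0_le by simp

definition beta_before :: "nat \<Rightarrow> nat set" where
  "beta_before t = {p. p < N \<and> v p < gamma_source t}"

definition beta_after :: "nat \<Rightarrow> nat set" where
  "beta_after t = {p. p < N \<and> gamma_source t < v p}"

lemma card_inv_less_split: "card {p. p < N \<and> v p < x} + card {t. gamma_source t < x} = x"
proof -
  let ?B = "{p. p < N \<and> v p < x}" and ?G = "(\<lambda>t. N + t) ` {t. gamma_source t < x}"
  have fin: "finite {p. v p < x}"
    using inv_less_eq_image[OF bij] by simp
  have decomp: "{p. v p < x} = ?B \<union> ?G"
    unfolding gamma_source_def by (auto simp: image_iff) (metis le_add_diff_inverse not_le)
  have "x = card (?B \<union> ?G)"
    using card_inv_less[OF bij, of x] unfolding decomp by simp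
  also have "\<dots> = card ?B + card ?G"
    by (rule card_Un_disjoint) (use fin decomp in \<open>auto intro: finite_subset\<close>)
  also have "card ?G = card {t. gamma_source t < x}"
    by (rule card_image) (simp add: inj_on_def)
  finally show ?thesis by simp
qed

lemma card_beta_before: "card (beta_before t) + t = gamma_source t"
  using card_inv_less_split[of "gamma_source t"] gamma_source_less_iff
  unfolding beta_before_def by simp

lemma card_beta_before_after: "card (beta_before t) + card (beta_after t) = N"
proof -
  have "v p \<noteq> gamma_source t" if "p < N" for p
    using that inv_eq_iff unfolding gamma_source_def by (metis add_diff_cancel_left' le_add1 not_le)
  then have "{..<N} = beta_before t \<union> beta_after t"
    unfolding beta_before_def beta_after_def by (auto simp: nat_neq_iff)
  moreover have "beta_before t \<inter> beta_after t = {}"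
    unfolding beta_before_def beta_after_def by auto
  ultimately show ?thesis
    by (metis card_Un_disjoint card_lessThan finite_Un finite_lessThan)
qed

lemma gamma_decomposition: "gamma t = int (conj alpha (gamma_source t)) + int (card (beta_after t))"
  using gamma_by_source[of t] card_beta_before[of t] card_beta_before_after[of t] by simp

lemma finite_gamma_support: "finite {t. gamma t \<noteq> 0}"
proof -
  obtain M where "\<forall>i\<in>{i. w i \<noteq> i}. i < M"
    using perm finite_nat_set_iff_bounded unfolding finite_perm_def by blast
  then have M: "w i = i" if "M \<le> i" for i
    using that not_le by blast
  have "gamma t = 0" if "M + alpha 0 \<le> t" for t
  proof -
    have "gamma_source t = N + t"
      using M[of "N + t"] that inv_eq_iff unfolding gamma_source_def by simp
    moreover have "conj alpha (N + t) = 0" using conj_eq_0[OF partition] that by simp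
    ultimately show ?thesis using gamma_by_source[of t] by simp
  qed
  then have "{t. gamma t \<noteq> 0} \<subseteq> {..<M + alpha 0}"
    using not_le by blast
  then show ?thesis by (rule finite_subset) simp
qed

lemma sum_card_beta_after_le:
  assumes "finite S"
  shows "(\<Sum>t\<in>S. card (beta_after t)) \<le> perm_length w"
proof -
  let ?f = "\<lambda>(t, p). (gamma_source t, v p)"
  have "finite (beta_after t)" for t unfolding beta_after_def by simp
  then have "(\<Sum>t\<in>S. card (beta_after t)) = card (SIGMA t:S. beta_after t)"
    using assms by simp
  also have "\<dots> \<le> card {(i, j). i < j \<and> w j < w i}"
  proof (rule card_inj_on_le[of ?f])
    show "inj_on ?f (SIGMA t:S. beta_after t)"
      by (rule inj_onI) (auto dest: injD[OF inj_gamma_source] injD[OF inj_inv])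
    show "?f ` (SIGMA t:S. beta_after t) \<subseteq> {(i, j). i < j \<and> w j < w i}"
    proof clarify
      fix t p assume "p \<in> beta_after t"
      then have "p < N" "gamma_source t < v p" unfolding beta_after_def by simp_all
      moreover have "w (gamma_source t) = N + t" unfolding gamma_source_def by simp
      ultimately show "gamma_source t < v p \<and> w (v p) < w (gamma_source t)" by simp
    qed
    show "finite {(i, j). i < j \<and> w j < w i}"
      using perm by (rule finite_inversions)
  qed
  finally show ?thesis unfolding perm_length_def .
qed

lemma sum_conj_gamma_source_le:
  assumes "finite S"
  shows "(\<Sum>t\<in>S. conj alpha (gamma_source t)) \<le> card (diag_excess d alpha)"
proof -
  let ?f = "\<lambda>(t, r). (r, gamma_source t)"
  have "(\<Sum>t\<in>S. conj alpha (gamma_source t)) = card (SIGMA t:S. {..<conj alpha (gamma_source t)})"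
    using assms by simp
  also have "\<dots> \<le> card (diag_excess d alpha)"
  proof (rule card_inj_on_le[of ?f])
    show "inj_on ?f (SIGMA t:S. {..<conj alpha (gamma_source t)})"
      by (rule inj_onI) (auto dest: injD[OF inj_gamma_source])
    show "?f ` (SIGMA t:S. {..<conj alpha (gamma_source t)}) \<subseteq> diag_excess d alpha"
    proof clarify
      fix t r assume r: "r < conj alpha (gamma_source t)"
      then have "gamma_source t < alpha r" using conj_less_iff[OF partition] by blast
      moreover have "r + d < gamma_source t" using r conj_at_gamma_source_le[of t] by linarith
      ultimately show "(r, gamma_source t) \<in> diag_excess d alpha"
        unfolding diag_excess_def diagram_def by simp
    qed
    show "finite (diag_excess d alpha)"
      using partition by (rule finite_diag_excess)
  qed
  finally show ?thesis .
qed

lemma seqsize_gamma_le: "seqsize gamma \<le> int (card (diag_excess d alpha)) + int (perm_length w)"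
proof -
  let ?S = "{t. gamma t \<noteq> 0}"
  have "seqsize gamma =
      (\<Sum>t\<in>?S. int (conj alpha (gamma_source t))) + (\<Sum>t\<in>?S. int (card (beta_after t)))"
    unfolding seqsize_def gamma_decomposition by (simp add: sum.distrib)
  also have "\<dots> \<le> int (card (diag_excess d alpha)) + int (perm_length w)"
    using sum_conj_gamma_source_le[OF finite_gamma_support]
      sum_card_beta_after_le[OF finite_gamma_support]
    by (simp only: of_nat_sum[symmetric] of_nat_le_iff add_mono)
  finally show ?thesis .
qed

lemma le_inv_on_beta: "i < N \<Longrightarrow> i \<le> v i"
proof (induction i)
  case (Suc i)
  then show ?case using inv_less_on_beta[of i "Suc i"] by simp
qed simp

lemma d_le_gamma_source: "d \<le> gamma_source t"
  using conj_at_gamma_source_le[of t] by simp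

lemma inv_eq_below_d: "i < d \<Longrightarrow> v i = i"
proof (induction i rule: less_induct)
  case (less i)
  define p where "p = w i"
  have vp: "v p = i" unfolding p_def by (simp add: inv_eq_iff)
  have "p < N"
  proof (rule ccontr)
    assume "\<not> p < N"
    then have "d \<le> v p" using d_le_gamma_source[of "p - N"] unfolding gamma_source_def by simp
    then show False using vp less.prems by simp
  qed
  then have "p \<le> i" using le_inv_on_beta vp by metis
  moreover have "\<not> p < i"
  proof
    assume "p < i"
    then have "v p = p" using less.IH less.prems by simp
    then show False using vp \<open>p < i\<close> by simp
  qed
  ultimately show ?case using vp by simp
qed

lemma beta_eq_conj_below_d: "i < d \<Longrightarrow> beta i = int (conj alpha i)"
  using dot_conj_apply[of i] inv_eq_below_d[of i] by simp

lemma beta_before_eq: "beta_before t = {..<gamma_source t - t}"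
proof -
  have "beta_before t = {..<card (beta_before t)}"
  proof (rule down_closed_eq_lessThan)
    show "finite (beta_before t)" unfolding beta_before_def by simp
    show "y \<in> beta_before t" if "x \<in> beta_before t" "y \<le> x" for x y
      using that inv_less_on_beta[of y x] unfolding beta_before_def by (cases "y = x") auto
  qed
  moreover have "card (beta_before t) = gamma_source t - t" using card_beta_before[of t] by simp
  ultimately show ?thesis by simp
qed

lemma inv_less_inv_iff: "i < N \<Longrightarrow> p < N \<Longrightarrow> v p < v i \<longleftrightarrow> p < i"
  using inv_less_on_beta by (metis less_asym' linorder_neqE_nat)

lemma conjZ_gamma_eq:
  assumes "alpha 0 \<le> d" and "d \<le> i" and "i < N"
  shows "conjZ gamma (n - 1 - (i - d)) = v i - i"
proof -
  have key: "int (n - 1 - (i - d)) < gamma t \<longleftrightarrow> gamma_source t < v i" for t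
  proof -
    have "conj alpha (gamma_source t) = 0"
      using conj_eq_0[OF partition] assms(1) d_le_gamma_source[of t] by simp
    then have "gamma t = int N - int (gamma_source t - t)"
      using gamma_decomposition[of t] card_beta_before_after[of t] card_beta_before[of t] by simp
    moreover have "int (n - 1 - (i - d)) = int N - 1 - int i" using assms(2,3) by simp
    ultimately have "int (n - 1 - (i - d)) < gamma t \<longleftrightarrow> i \<notin> beta_before t"
      unfolding beta_before_eq by auto
    also have "\<dots> \<longleftrightarrow> gamma_source t < v i"
    proof -
      have "v i \<noteq> gamma_source t"
        using assms(3) inv_eq_iff unfolding gamma_source_def by force
      then show ?thesis unfolding beta_before_def using assms(3) by auto
    qed
    finally show ?thesis .
  qed
  have "{p. p < N \<and> v p < v i} = {..<i}"
    using inv_less_inv_iff assms(3) by auto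
  then have "i + card {t. gamma_source t < v i} = v i"
    using card_inv_less_split[of "v i"] by simp
  then show ?thesis unfolding conjZ_def key by simp
qed

lemma dot_conj_eq_if_alpha_le_d:
  assumes "alpha 0 \<le> d"
  shows "dot w (\<lambda>i. int (conj alpha i)) =
    (\<lambda>i. if i < d then int (conj alpha i)
         else if i < d + n then - int (conjZ gamma (n - 1 - (i - d)))
         else gamma (i - (d + n)))"
proof
  fix i
  consider "i < d" | "d \<le> i" "i < N" | "N \<le> i" by linarith
  then show "dot w (\<lambda>i. int (conj alpha i)) i =
    (if i < d then int (conj alpha i)
     else if i < d + n then - int (conjZ gamma (n - 1 - (i - d)))
     else gamma (i - (d + n)))"
  proof cases
    case 1
    then show ?thesis using inv_eq_below_d by (simp add: dot_apply)
  next
    case 2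
    then have "conj alpha (v i) = 0"
      using conj_eq_0[OF partition] assms le_inv_on_beta[of i] by simp
    then show ?thesis
      using 2 conjZ_gamma_eq[OF assms 2] le_inv_on_beta[of i] by (simp add: dot_apply)
  next
    case 3
    then show ?thesis using fun_cong[OF dot_eq, of i] by (simp add: add.commute)
  qed
qed

end

theorem lemma3p12:
  fixes n d k :: nat and lam alpha w :: "nat \<Rightarrow> nat" and beta gamma :: "nat \<Rightarrow> int"
  assumes "0 < k"
    and "is_partition lam" and "lam 0 \<le> d" and "plen lam \<le> k"
    and "is_partition alpha" and "alpha n \<le> n + d"
    and "tauC k alpha = Some lam"
    and "finite_perm w"
    and "dot w (\<lambda>i. int (conj alpha i)) =
           (\<lambda>i. if i < n + d then beta i else gamma (i - (n + d)))"
    and "\<forall>i. Suc i < n + d \<longrightarrow> beta (Suc i) \<le> beta i"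
    and "gamma 0 \<le> int n" and "\<forall>i. gamma (Suc i) \<le> gamma i" and "\<forall>i. 0 \<le> gamma i"
  shows "enat (nat (seqsize gamma)) \<le> iotaC k alpha + enat (perm_length w)
    \<and> (enat (nat (seqsize gamma)) = iotaC k alpha + enat (perm_length w) \<longrightarrow>
         iotaC k alpha = 0
       \<and> (\<lambda>i. int (conj alpha i)) = (\<lambda>i. int (conj lam i))
       \<and> (\<lambda>i. int (conj lam i)) = (\<lambda>i. if i < d then beta i else 0)
       \<and> dot w (\<lambda>i. int (conj alpha i)) =
           (\<lambda>i. if i < d then int (conj lam i)
                else if i < d + n then - int (conjZ gamma (n - 1 - (i - d)))
                else gamma (i - (d + n)))
       \<and> seqsize gamma = int (perm_length w))"
proof -
  interpret dot_split alpha w n d beta gamma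
    by (rule dot_split.intro[OF assms(5,8-12)])
  obtain c where tau: "iota_tau k alpha = Some (c, lam)"
    using assms(7) unfolding tauC_def by auto
  then have iota: "iotaC k alpha = enat c"
    unfolding iotaC_def by simp
  have "0 \<le> seqsize gamma"
    unfolding seqsize_def using assms(13) by (simp add: sum_nonneg)
  show ?thesis
  proof (cases "c = 0 \<and> lam = alpha")
    case True
    have "seqsize gamma \<le> int (perm_length w)"
      using seqsize_gamma_le diag_excess_empty[OF assms(5)] assms(3) True by simp
    moreover have "(\<lambda>i. int (conj lam i)) = (\<lambda>i. if i < d then beta i else 0)"
    proof
      fix i
      show "int (conj lam i) = (if i < d then beta i else 0)"
        using True beta_eq_conj_below_d[of i] conj_eq_0[OF assms(2), of i] assms(3) by auto
    qed
    ultimately show ?thesis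
      using True iota \<open>0 \<le> seqsize gamma\<close> dot_conj_eq_if_alpha_le_d assms(3)
      by (auto simp: zero_enat_def)
  next
    case False
    then have "seqsize gamma < int c + int (perm_length w)"
      using iota_tau_diag_excess[OF tau assms(5,3)] seqsize_gamma_le by linarith
    then have "nat (seqsize gamma) < c + perm_length w"
      using \<open>0 \<le> seqsize gamma\<close> by (simp add: nat_less_iff)
    then show ?thesis using iota by simp
  qed
qed

end
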